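(* Let $[R_1,\dots,R_L]$ be the rule vector of a one-dimensional linear null hybrid 90/150 cellular automaton and let $P_i(x)=\sum_j c^{(i)}_j x^j$ denote the characteristic polynomial of the sub-automaton $R_1R_2\cdots R_i$. For any evolution of the automaton, write $z_t=x_1^t$ for the sequence in the leftmost cell. Then for every $1\le i\le L$ and every $t$, $$x_i^t=\sum_j c^{(i-1)}_j\, z_{t+j}.$$ Consequently, if the cell-$i$ sequence $\{x_i^t\}$ is in turn placed as the leftmost-cell sequence of the same automaton and this is repeated, then after $n$ such steps the sequence obtained at cell $i$ is $\sum_j d_j z_{t+j}$, where $P_{i-1}(x)^n=\sum_j d_j x^j$ (coefficients in $GF(2)$). *)

theory Defs
  imports "HOL-Library.Z2" "Jordan_Normal_Form.Char_Poly"
begin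

text \<open>The rule vector is R :: nat => bit with R i = 0 meaning rule 90 and
  R i = 1 meaning rule 150 at cell i (cells numbered 1..L).\<close>

definition ca_evolution :: "nat \<Rightarrow> (nat \<Rightarrow> bit) \<Rightarrow> (nat \<Rightarrow> nat \<Rightarrow> bit) \<Rightarrow> bool" where
  "ca_evolution L R x \<longleftrightarrow>
     (\<forall>t. \<forall>i\<in>{1..L}.
        x (Suc t) i = (if i = 1 then 0 else x t (i - 1)) + R i * x t i
                      + (if i = L then 0 else x t (i + 1)))"

text \<open>Transition matrix (tridiagonal) of the sub-automaton R_1 R_2 ... R_i, 0-based indices.\<close>
definition sub_ca_matrix :: "(nat \<Rightarrow> bit) \<Rightarrow> nat \<Rightarrow> bit mat" where
  "sub_ca_matrix R i = mat i i (\<lambda>(a, b). if a = b then R (a + 1)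
                                   else if a = b + 1 \<or> b = a + 1 then 1 else 0)"

definition sub_ca_char_poly :: "(nat \<Rightarrow> bit) \<Rightarrow> nat \<Rightarrow> bit poly" where
  "sub_ca_char_poly R i = char_poly (sub_ca_matrix R i)"

definition poly_shift :: "bit poly \<Rightarrow> (nat \<Rightarrow> bit) \<Rightarrow> nat \<Rightarrow> bit" where
  "poly_shift p z t = (\<Sum>j\<le>degree p. coeff p j * z (t + j))"

end

theory Submission
  imports Defs
begin

(* Let z_t = x_1^t be the leftmost-cell sequence and let a polynomial
   p = \<Sum> d_j X^j act on sequences as the shift operator (p z)_t = \<Sum> d_j z_(t+j)
   (poly_shift).  This is a ring action: sums act as sums and products as composition.
   Solving the update rule of cell i for its right neighbour gives, over GF(2),
     x_(i+1) = (X + R_i) x_i + x_(i-1)      (with x_0 = 0),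
   while expanding the tridiagonal determinant of X - A_i along its last column gives the
   same three-term recurrence P_i = (X + R_i) P_(i-1) + P_(i-2) (with P_(-1) = 0).
   Since x_1 = P_0 z and both sequences satisfy the same recurrence, x_i = P_(i-1) z.
   Feeding cell i back into cell 1 repeatedly composes the operator P_(i-1) with itself,
   so after n rounds the action of P_(i-1)^n is obtained. *)

lemma poly_shift_upto:
  assumes "degree p \<le> N"
  shows "(\<Sum>j\<le>N. coeff p j * z (t + j)) = poly_shift p z t"
  unfolding poly_shift_def
  by (rule sum.mono_neutral_right) (use assms in \<open>auto simp: coeff_eq_0\<close>)

lemma poly_shift_0 [simp]: "poly_shift 0 z t = 0"
  unfolding poly_shift_def by simp

lemma poly_shift_pCons: "poly_shift (pCons a p) z t = a * z t + poly_shift p z (Suc t)"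
proof -
  have "poly_shift (pCons a p) z t = (\<Sum>j\<le>Suc (degree p). coeff (pCons a p) j * z (t + j))"
    by (rule poly_shift_upto[symmetric]) (simp add: degree_pCons_le)
  also have "\<dots> = a * z t + (\<Sum>j\<le>degree p. coeff p j * z (Suc t + j))"
    by (subst sum.atMost_Suc_shift) simp
  finally show ?thesis unfolding poly_shift_def .
qed

lemma poly_shift_1: "poly_shift 1 z t = z t"
  by (simp add: one_pCons poly_shift_pCons)

lemma poly_shift_linear: "poly_shift [:a, 1:] z t = a * z t + z (Suc t)"
  by (simp add: poly_shift_pCons)

lemma poly_shift_add: "poly_shift (p + q) z t = poly_shift p z t + poly_shift q z t"
proof -
  let ?N = "max (degree p) (degree q)"
  have "poly_shift (p + q) z t = (\<Sum>j\<le>?N. coeff (p + q) j * z (t + j))"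
    by (rule poly_shift_upto[symmetric]) (simp add: degree_add_le)
  also have "\<dots> = (\<Sum>j\<le>?N. coeff p j * z (t + j)) + (\<Sum>j\<le>?N. coeff q j * z (t + j))"
    by (simp only: coeff_add distrib_right sum.distrib)
  also have "\<dots> = poly_shift p z t + poly_shift q z t"
    by (simp only: poly_shift_upto[OF max.cobounded1] poly_shift_upto[OF max.cobounded2])
  finally show ?thesis .
qed

lemma poly_shift_smult: "poly_shift (Polynomial.smult a q) z t = a * poly_shift q z t"
proof -
  have "poly_shift (Polynomial.smult a q) z t = (\<Sum>j\<le>degree q. coeff (Polynomial.smult a q) j * z (t + j))"
    by (rule poly_shift_upto[symmetric]) (simp add: degree_smult_le)
  also have "\<dots> = a * poly_shift q z t"
    by (simp only: poly_shift_def coeff_smult sum_distrib_left mult.assoc)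
  finally show ?thesis .
qed

lemma poly_shift_mult: "poly_shift (p * q) z = poly_shift p (poly_shift q z)"
proof
  show "poly_shift (p * q) z t = poly_shift p (poly_shift q z) t" for t
  proof (induction p arbitrary: t)
    case 0
    show ?case by simp
  next
    case (pCons a p)
    have "pCons a p * q = Polynomial.smult a q + pCons 0 (p * q)" by simp
    then show ?case
      by (simp only: poly_shift_add poly_shift_smult poly_shift_pCons pCons.IH) simp
  qed
qed

lemma poly_shift_power_Suc: "poly_shift (p ^ Suc n) z = poly_shift p (poly_shift (p ^ n) z)"
  by (simp only: power_Suc poly_shift_mult)

definition leading_block :: "nat \<Rightarrow> 'a mat \<Rightarrow> 'a mat" where
  "leading_block k A = mat k k (\<lambda>(a, b). A $$ (a, b))"

text \<open>Expanding a tridiagonal determinant along the last column and then the last row gives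
  the classical three-term recurrence in terms of the two largest leading principal minors.\<close>
lemma det_tridiagonal_expand:
  fixes A :: "'a :: comm_ring_1 mat"
  assumes A: "A \<in> carrier_mat (Suc (Suc n)) (Suc (Suc n))"
    and tri: "\<And>a b. a < Suc (Suc n) \<Longrightarrow> b < Suc (Suc n) \<Longrightarrow> Suc a < b \<or> Suc b < a \<Longrightarrow> A $$ (a, b) = 0"
  shows "det A = A $$ (Suc n, Suc n) * det (leading_block (Suc n) A)
                 - A $$ (n, Suc n) * A $$ (Suc n, n) * det (leading_block n A)"
proof -
  let ?B = "mat_delete A n (Suc n)"
  have B: "?B \<in> carrier_mat (Suc n) (Suc n)" using mat_delete_carrier[OF A] by simp
  have last_col: "det A = A $$ (n, Suc n) * cofactor A n (Suc n)
                         + A $$ (Suc n, Suc n) * cofactor A (Suc n) (Suc n)"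
  proof -
    have "det A = (\<Sum>a<Suc (Suc n). A $$ (a, Suc n) * cofactor A a (Suc n))"
      by (rule laplace_expansion_column[OF A]) auto
    moreover have "(\<Sum>a<n. A $$ (a, Suc n) * cofactor A a (Suc n)) = 0"
      by (rule sum.neutral) (auto simp: tri)
    ultimately show ?thesis by simp
  qed
  have minor_last_row: "det ?B = A $$ (Suc n, n) * det (leading_block n A)"
  proof -
    have "det ?B = (\<Sum>b<Suc n. ?B $$ (n, b) * cofactor ?B n b)"
      by (rule laplace_expansion_row[OF B]) auto
    moreover have "(\<Sum>b<n. ?B $$ (n, b) * cofactor ?B n b) = 0"
      by (rule sum.neutral) (use A in \<open>auto simp: mat_delete_def tri\<close>)
    moreover have "mat_delete ?B n n = leading_block n A"
      by (rule eq_matI) (use A in \<open>auto simp: mat_delete_def leading_block_def\<close>)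
    ultimately show ?thesis using A by (simp add: cofactor_def mat_delete_def)
  qed
  have "mat_delete A (Suc n) (Suc n) = leading_block (Suc n) A"
    by (rule eq_matI) (use A in \<open>auto simp: mat_delete_def leading_block_def\<close>)
  with last_col minor_last_row show ?thesis by (simp add: cofactor_def algebra_simps)
qed

lemma bit_poly_minus [simp]: "(p :: bit poly) - q = p + q"
  by (simp add: poly_eq_iff)

definition sub_ca_char_matrix :: "(nat \<Rightarrow> bit) \<Rightarrow> nat \<Rightarrow> bit poly mat" where
  "sub_ca_char_matrix R n = char_poly_matrix (sub_ca_matrix R n)"

lemma sub_ca_char_matrix_carrier: "sub_ca_char_matrix R n \<in> carrier_mat n n"
  unfolding sub_ca_char_matrix_def sub_ca_matrix_def by (rule char_poly_matrix_closed) auto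

lemma sub_ca_char_matrix_entry:
  assumes "a < n" "b < n"
  shows "sub_ca_char_matrix R n $$ (a, b) =
    (if a = b then [:R (a + 1), 1:] else if a = b + 1 \<or> b = a + 1 then 1 else 0)"
  using assms unfolding sub_ca_char_matrix_def char_poly_matrix_def sub_ca_matrix_def
  by (auto simp: one_pCons)

lemma leading_block_sub_ca_char_matrix:
  "k \<le> n \<Longrightarrow> leading_block k (sub_ca_char_matrix R n) = sub_ca_char_matrix R k"
  using sub_ca_char_matrix_carrier[of R n] sub_ca_char_matrix_carrier[of R k]
  by (intro eq_matI) (auto simp: leading_block_def sub_ca_char_matrix_entry)

lemma sub_ca_char_poly_0: "sub_ca_char_poly R 0 = 1"
  unfolding sub_ca_char_poly_def char_poly_def sub_ca_matrix_def char_poly_matrix_def by simp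

lemma sub_ca_char_poly_1: "sub_ca_char_poly R 1 = [:R 1, 1:]"
proof -
  have "det (sub_ca_char_matrix R 1) = sub_ca_char_matrix R 1 $$ (0, 0)"
    by (rule det_single) (rule sub_ca_char_matrix_carrier)
  then show ?thesis
    by (simp add: sub_ca_char_poly_def char_poly_def sub_ca_char_matrix_entry flip: sub_ca_char_matrix_def)
qed

lemma sub_ca_char_poly_rec:
  "sub_ca_char_poly R (Suc i) =
     [:R (Suc i), 1:] * sub_ca_char_poly R i + (if i = 0 then 0 else sub_ca_char_poly R (i - 1))"
proof (cases i)
  case 0
  then show ?thesis using sub_ca_char_poly_1[of R] by (simp add: sub_ca_char_poly_0)
next
  case (Suc n)
  let ?A = "sub_ca_char_matrix R (Suc (Suc n))"
  have "det ?A = ?A $$ (Suc n, Suc n) * det (leading_block (Suc n) ?A)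
                 - ?A $$ (n, Suc n) * ?A $$ (Suc n, n) * det (leading_block n ?A)"
    by (rule det_tridiagonal_expand[OF sub_ca_char_matrix_carrier])
       (auto simp: sub_ca_char_matrix_entry)
  then show ?thesis
    using Suc by (simp add: sub_ca_char_poly_def char_poly_def leading_block_sub_ca_char_matrix
      sub_ca_char_matrix_entry flip: sub_ca_char_matrix_def)
qed

text \<open>In GF(2) every element is its own negative, so a sum can be solved for any summand.\<close>
lemma bit_add_solve: "(a :: bit) = b + c + d \<Longrightarrow> d = a + b + c"
  by (cases a; cases b; cases c; cases d) auto

lemma ca_evolution_next_cell:
  assumes ev: "ca_evolution L R x" and i: "1 \<le> i" "i < L"
  shows "x t (Suc i) = poly_shift [:R i, 1:] (\<lambda>s. x s i) t + (if i = 1 then 0 else x t (i - 1))"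
proof -
  have "x (Suc t) i = (if i = 1 then 0 else x t (i - 1)) + R i * x t i + x t (Suc i)"
    using ev i unfolding ca_evolution_def by auto
  then have "x t (Suc i) = x (Suc t) i + (if i = 1 then 0 else x t (i - 1)) + R i * x t i"
    by (rule bit_add_solve)
  then show ?thesis by (simp only: poly_shift_linear add_ac)
qed

text \<open>First part: cell i carries the shift action of P_(i-1) applied to the leftmost cell.
  Both sides satisfy the same three-term recurrence in i, so strong induction applies.\<close>
theorem cell_eq_sub_ca_char_poly_shift:
  assumes ev: "ca_evolution L R x" and i: "1 \<le> i" "i \<le> L"
  shows "(\<lambda>t. x t i) = poly_shift (sub_ca_char_poly R (i - 1)) (\<lambda>s. x s 1)"
  using i
proof (induction i rule: less_induct)
  case (less i)
  let ?z = "\<lambda>s. x s 1" and ?P = "sub_ca_char_poly R"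
  show ?case
  proof (cases "i = 1")
    case True
    then show ?thesis by (simp add: sub_ca_char_poly_0 poly_shift_1)
  next
    case False
    then obtain j where j: "i = Suc j" "1 \<le> j" "j < L" using less.prems by (cases i) auto
    have cell_j: "(\<lambda>t. x t j) = poly_shift (?P (j - 1)) ?z"
      using less.IH[of j] j by simp
    have cell_before_j: "(\<lambda>t. if j = 1 then 0 else x t (j - 1))
                       = poly_shift (if j = 1 then 0 else ?P (j - 2)) ?z"
    proof (cases "j = 1")
      case False
      then have "j - 1 - 1 = j - 2" "1 \<le> j - 1" using j by auto
      then show ?thesis using False less.IH[of "j - 1"] j by simp
    qed (simp add: fun_eq_iff)
    have char_rec: "?P j = [:R j, 1:] * ?P (j - 1) + (if j = 1 then 0 else ?P (j - 2))"
    proof -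
      have "Suc (j - 1) = j" "j - 1 - 1 = j - 2" "(j - 1 = 0) = (j = 1)" using j by auto
      then show ?thesis using sub_ca_char_poly_rec[of R "j - 1"] by simp
    qed
    have "(\<lambda>t. x t i)
        = (\<lambda>t. poly_shift [:R j, 1:] (\<lambda>s. x s j) t + (if j = 1 then 0 else x t (j - 1)))"
      using ca_evolution_next_cell[OF ev j(2,3)] j(1) by simp
    also have "\<dots> = (\<lambda>t. poly_shift [:R j, 1:] (poly_shift (?P (j - 1)) ?z) t
                        + poly_shift (if j = 1 then 0 else ?P (j - 2)) ?z t)"
      by (simp only: cell_j flip: cell_before_j)
    also have "\<dots> = poly_shift (?P j) ?z"
      by (rule ext) (simp only: char_rec poly_shift_add poly_shift_mult)
    finally show ?thesis using j(1) by simp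
  qed
qed

lemma iterated_cell_eq_power_shift:
  assumes i: "1 \<le> i" "i \<le> L" and ev: "\<And>k. ca_evolution L R (e k)"
    and feed: "\<And>k s. e (Suc k) s 1 = e k s i"
  shows "(\<lambda>t. e m t i) = poly_shift (sub_ca_char_poly R (i - 1) ^ Suc m) (\<lambda>s. e 0 s 1)"
proof (induction m)
  case 0
  show ?case using cell_eq_sub_ca_char_poly_shift[OF ev i] by simp
next
  case (Suc m)
  have "(\<lambda>s. e (Suc m) s 1) = (\<lambda>s. e m s i)" using feed by simp
  then have "(\<lambda>t. e (Suc m) t i) = poly_shift (sub_ca_char_poly R (i - 1)) (\<lambda>s. e m s i)"
    using cell_eq_sub_ca_char_poly_shift[OF ev i, of "Suc m"] by simp
  then show ?case by (simp only: Suc.IH poly_shift_power_Suc)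
qed

theorem mainTheorem6:
  fixes L :: nat and R :: "nat \<Rightarrow> bit" and x :: "nat \<Rightarrow> nat \<Rightarrow> bit"
    and e :: "nat \<Rightarrow> nat \<Rightarrow> nat \<Rightarrow> bit"
  assumes "ca_evolution L R x"
  shows "(\<forall>i\<in>{1..L}. \<forall>t. x t i = poly_shift (sub_ca_char_poly R (i - 1)) (\<lambda>s. x s 1) t)
    \<and> (\<forall>i\<in>{1..L}.
         (\<forall>k. ca_evolution L R (e k))
         \<longrightarrow> (\<forall>s. e 0 s 1 = x s 1)
         \<longrightarrow> (\<forall>k s. e (Suc k) s 1 = e k s i)
         \<longrightarrow> (\<forall>n\<ge>1. \<forall>t. e (n - 1) t i
                = poly_shift (sub_ca_char_poly R (i - 1) ^ n) (\<lambda>s. x s 1) t))"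
proof (intro conjI ballI impI allI)
  show "x t i = poly_shift (sub_ca_char_poly R (i - 1)) (\<lambda>s. x s 1) t" if "i \<in> {1..L}" for i t
    using cell_eq_sub_ca_char_poly_shift[OF assms, of i] that by (simp add: fun_eq_iff)
next
  fix i n t :: nat
  assume i: "i \<in> {1..L}" and ev: "\<forall>k. ca_evolution L R (e k)"
    and start: "\<forall>s. e 0 s 1 = x s 1" and feed: "\<forall>k s. e (Suc k) s 1 = e k s i" and n: "1 \<le> n"
  have "(\<lambda>s. e 0 s 1) = (\<lambda>s. x s 1)" using start by simp
  moreover have "Suc (n - 1) = n" using n by simp
  ultimately show "e (n - 1) t i = poly_shift (sub_ca_char_poly R (i - 1) ^ n) (\<lambda>s. x s 1) t"
    using iterated_cell_eq_power_shift[of i L R e "n - 1"] i ev feed by (simp add: fun_eq_iff)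
qed

end
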